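(* Let $p,q$ be positive integers, $e>1$ an integer, $s$ a positive integer and $m$ a non-negative integer. If $$\tfrac12 G_{2^m s}\equiv 1\pmod{2^e}\quad\text{and}\quad \tfrac12 G_{2^m s}\not\equiv 1\pmod{2^{e+1}},$$ then for every positive integer $l$, $$\tfrac12 G_{2^{m+l}s}\equiv 1\pmod{2^{e+2l-1}},\quad \tfrac12 G_{2^{m+l}s}\equiv 1\pmod{2^{e+2l}},\quad \tfrac12 G_{2^{m+l}s}\not\equiv 1\pmod{2^{e+2l+1}}.$$
   Context: $A=pq+2$, $B=\sqrt{A^2-4}$, $G_n=\left(\frac{A+B}{2}\right)^n+\left(\frac{A-B}{2}\right)^n$ (an integer); congruences involving $\frac12 G_n$ require $\frac12G_n$ to be an integer. *)

theory Defs
  imports Complex_Main "HOL-Number_Theory.Cong"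
begin

definition A_par :: "int \<Rightarrow> int \<Rightarrow> int" where
  "A_par p q = p * q + 2"

definition B_par :: "int \<Rightarrow> int \<Rightarrow> real" where
  "B_par p q = sqrt ((real_of_int (A_par p q))\<^sup>2 - 4)"

definition G :: "int \<Rightarrow> int \<Rightarrow> nat \<Rightarrow> real" where
  "G p q n = ((real_of_int (A_par p q) + B_par p q) / 2) ^ n
           + ((real_of_int (A_par p q) - B_par p q) / 2) ^ n"

end

theory Submission
  imports Defs
begin

text \<open>Since ((A+B)/2)((A-B)/2) = 1, the sequence satisfies G(2n) = G(n)^2 - 2, so
  k = G(n)/2 is replaced by 2k^2 - 1 when n is doubled. Writing k = 1 + 2^E u with u odd,
  2k^2 - 2 = 2^(E+2) (u + 2^(E-1) u^2), and the cofactor is again odd when E \<ge> 2: every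
  doubling raises the exact power of 2 dividing k - 1 by two.\<close>

lemma G_double:
  assumes "p * q \<ge> 0"
  shows "G p q (2 * n) = (G p q n)^2 - 2"
proof -
  define a where "a = real_of_int (A_par p q)"
  define b where "b = B_par p q"
  define x where "x = (a + b) / 2"
  define y where "y = (a - b) / 2"
  have "real_of_int (p * q) \<ge> 0"
    using assms by linarith
  then have "a \<ge> 2"
    unfolding a_def A_par_def by simp
  then have "a * a \<ge> 2 * 2"
    by (intro mult_mono) auto
  then have "b^2 = a^2 - 4"
    unfolding b_def B_par_def a_def[symmetric] by (simp add: power2_eq_square)
  then have roots_prod: "x * y = 1"
    unfolding x_def y_def by (simp add: field_simps power2_eq_square)
  have G_xy: "G p q k = x^k + y^k" for k
    unfolding G_def x_def y_def a_def b_def ..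
  have "G p q (2 * n) = (x^n)^2 + (y^n)^2"
    unfolding G_xy by (simp add: power_mult mult.commute[of 2 n])
  also have "\<dots> = (x^n + y^n)^2 - 2 * (x * y)^n"
    by (simp add: power2_eq_square power_mult_distrib algebra_simps)
  also have "\<dots> = (G p q n)^2 - 2"
    unfolding roots_prod G_xy by simp
  finally show ?thesis .
qed

lemma half_G_double:
  assumes "p * q \<ge> 0" and "G p q n / 2 = real_of_int k"
  shows "G p q (2 * n) / 2 = real_of_int (2 * k^2 - 1)"
proof -
  have "G p q n = 2 * real_of_int k"
    using assms(2) by simp
  then show ?thesis
    using G_double[OF assms(1)] by (simp add: power2_eq_square)
qed

definition pow2_exact_dvd :: "nat \<Rightarrow> int \<Rightarrow> bool" where
  "pow2_exact_dvd E x \<longleftrightarrow> 2^E dvd x \<and> \<not> 2^(E + 1) dvd x"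

lemma pow2_exact_dvd_iff: "pow2_exact_dvd E x \<longleftrightarrow> (\<exists>u. odd u \<and> x = 2^E * u)"
proof
  assume "pow2_exact_dvd E x"
  then obtain u where u: "x = 2^E * u" and "\<not> 2^(E + 1) dvd x"
    unfolding pow2_exact_dvd_def by blast
  then have "odd u"
    by (auto simp: mult.assoc)
  with u show "\<exists>u. odd u \<and> x = 2^E * u" by blast
next
  assume "\<exists>u. odd u \<and> x = 2^E * u"
  then obtain u where "odd u" "x = 2^E * u" by blast
  then show "pow2_exact_dvd E x"
    unfolding pow2_exact_dvd_def by simp
qed

lemma pow2_exact_dvd_double_sq_pred:
  assumes "E \<ge> 2" and "pow2_exact_dvd E (k - 1)"
  shows "pow2_exact_dvd (E + 2) (2 * k^2 - 1 - 1)"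
proof -
  obtain u where "odd u" and u: "k - 1 = 2^E * u"
    using assms(2) pow2_exact_dvd_iff by blast
  have "E + E + 1 = (E + 2) + (E - 1)"
    using assms(1) by simp
  then have "(2::int)^(E + E + 1) = 2^(E + 2) * 2^(E - 1)"
    by (metis power_add)
  then have "2 * k^2 - 1 - 1 = 2^(E + 2) * (u + 2^(E - 1) * u^2)"
    using u by (simp add: eq_diff_eq power2_eq_square power_add algebra_simps)
  moreover have "odd (u + 2^(E - 1) * u^2)"
    using assms(1) \<open>odd u\<close> by simp
  ultimately show ?thesis
    using pow2_exact_dvd_iff by blast
qed

lemma half_G_pow2_exact_dvd:
  assumes "p * q \<ge> 0" and "E \<ge> 2"
    and "G p q n / 2 = real_of_int k" and "pow2_exact_dvd E (k - 1)"
  shows "\<exists>k'. G p q (2^l * n) / 2 = real_of_int k' \<and> pow2_exact_dvd (E + 2 * l) (k' - 1)"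
proof (induction l)
  case 0
  show ?case using assms(3,4) by auto
next
  case (Suc l)
  then obtain k' where "G p q (2^l * n) / 2 = real_of_int k'" "pow2_exact_dvd (E + 2 * l) (k' - 1)"
    by blast
  moreover have "E + 2 * l \<ge> 2"
    using assms(2) by simp
  ultimately have "G p q (2^Suc l * n) / 2 = real_of_int (2 * k'^2 - 1)"
    and "pow2_exact_dvd (E + 2 * Suc l) (2 * k'^2 - 1 - 1)"
    using half_G_double[OF assms(1)] pow2_exact_dvd_double_sq_pred
    by (simp_all add: mult.assoc add.assoc)
  then show ?case by blast
qed

theorem lemma4:
  fixes p q :: int and e s m :: nat
  assumes "p > 0" and "q > 0" and "e > 1" and "s > 0"
    and "\<exists>k::int. G p q (2^m * s) / 2 = real_of_int k
           \<and> [k = 1] (mod 2^e) \<and> \<not> [k = 1] (mod 2^(e+1))"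
  shows "\<forall>l::nat. l > 0 \<longrightarrow>
           (\<exists>k::int. G p q (2^(m+l) * s) / 2 = real_of_int k
              \<and> [k = 1] (mod 2^(e+2*l-1))
              \<and> [k = 1] (mod 2^(e+2*l))
              \<and> \<not> [k = 1] (mod 2^(e+2*l+1)))"
proof (intro allI impI)
  fix l :: nat
  have "p * q \<ge> 0" using assms(1,2) by simp
  obtain k0 where "G p q (2^m * s) / 2 = real_of_int k0" "pow2_exact_dvd e (k0 - 1)"
    using assms(5) unfolding pow2_exact_dvd_def cong_iff_dvd_diff by blast
  moreover have "2^(m+l) * s = 2^l * (2^m * s)"
    by (simp add: power_add)
  ultimately obtain k where k: "G p q (2^(m+l) * s) / 2 = real_of_int k"
    and exact: "pow2_exact_dvd (e + 2 * l) (k - 1)"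
    using half_G_pow2_exact_dvd[OF \<open>p * q \<ge> 0\<close>, of e] assms(3) by fastforce
  have "(2::int)^(e + 2 * l - 1) dvd 2^(e + 2 * l)"
    by (rule le_imp_power_dvd) simp
  with exact show "\<exists>k::int. G p q (2^(m+l) * s) / 2 = real_of_int k
              \<and> [k = 1] (mod 2^(e+2*l-1))
              \<and> [k = 1] (mod 2^(e+2*l))
              \<and> \<not> [k = 1] (mod 2^(e+2*l+1))"
    using k unfolding pow2_exact_dvd_def cong_iff_dvd_diff by (blast intro: dvd_trans)
qed

end
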